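(* Let $\Phi:\mathcal D\to\mathcal D$ be a unital completely positive map satisfying $\Phi(BDB^{-1})=B\Phi(D)B^{-1}$ for all $D\in\mathcal D$. Then there is a well-defined unital completely positive map $\Gamma: B(\ell^2(\mathbb Z))\to B(\ell^2(\mathbb Z))$ which is a bimodule map over the Laurent matrices and satisfies $\Gamma\big(\sum_{n\in\mathbb Z}D_nB^n\big)=\sum_{n\in\mathbb Z}\Phi(D_n)B^n$ in the sense of formal Fourier series, i.e. $\widehat{\Gamma(A)}(n)=\Phi(\hat A(n))$ for all $A$ and $n$. Moreover, if $\Phi$ is idempotent, then $\Gamma$ is idempotent.
   Context: $\{e_n\}_{n\in\mathbb Z}$ is the standard basis of $\ell^2(\mathbb Z)$ and $B$ is the bilateral shift $Be_n=e_{n+1}$. $\mathcal D\subseteq B(\ell^2(\mathbb Z))$ is the algebra of bounded diagonal operators (identified with $\ell^\infty(\mathbb Z)$), and $E:B(\ell^2(\mathbb Z))\to\mathcal D$ is the map keeping the diagonal entries of a matrix. For $A\in B(\ell^2(\mathbb Z))$, $\hat A(n)=E(AB^{-n})\in\mathcal D$, and $\sum_n\hat A(n)B^n$ is its formal Fourier series, which uniquely determines $A$. The Laurent matrices are the operators with matrix entries $a_{i,j}=\hat f(i-j)$ for $f\in L^\infty(\mathbb T)$; under $\ell^2(\mathbb Z)\cong L^2(\mathbb T)$, $e_n\mapsto z^n$, they are the multiplication operators by $L^\infty(\mathbb T)$ ("$L^\infty$-bimodule map"). *)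

theory Defs
  imports "HOL-Analysis.Analysis"
begin

text \<open>Operators on l2(Z) are represented by their matrices w.r.t. the standard basis e_n.
  A matrix is a bounded operator iff it is bounded on finitely supported vectors.\<close>

type_synonym mat = "int \<Rightarrow> int \<Rightarrow> complex"

definition finsupp :: "(int \<Rightarrow> complex) \<Rightarrow> bool" where
  "finsupp x \<longleftrightarrow> finite {i. x i \<noteq> 0}"

definition supp :: "(int \<Rightarrow> complex) \<Rightarrow> int set" where
  "supp x = {i. x i \<noteq> 0}"

definition mapply :: "mat \<Rightarrow> (int \<Rightarrow> complex) \<Rightarrow> int \<Rightarrow> complex" where
  "mapply A x = (\<lambda>i. \<Sum>j\<in>supp x. A i j * x j)"

definition bounded_mat :: "mat \<Rightarrow> bool" where
  "bounded_mat A \<longleftrightarrow> (\<exists>C. \<forall>x. finsupp x \<longrightarrow> (\<forall>F. finite F \<longrightarrow>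
      (\<Sum>i\<in>F. (cmod (mapply A x i))\<^sup>2) \<le> C * (\<Sum>j\<in>supp x. (cmod (x j))\<^sup>2)))"

definition BL :: "mat set" where
  "BL = {A. bounded_mat A}"

text \<open>Composition of operators = matrix product (absolutely convergent for bounded matrices).\<close>
definition mmul :: "mat \<Rightarrow> mat \<Rightarrow> mat" where
  "mmul A C = (\<lambda>i j. \<Sum>\<^sub>\<infinity>k. A i k * C k j)"

definition idm :: mat where
  "idm = (\<lambda>i j. if i = j then 1 else 0)"

text \<open>B^n for n in Z, where B e_n = e_(n+1)\<close>
definition bshift :: "int \<Rightarrow> mat" where
  "bshift n = (\<lambda>i j. if i = j + n then 1 else 0)"

definition Diag :: "mat set" where
  "Diag = {A. bounded_mat A \<and> (\<forall>i j. i \<noteq> j \<longrightarrow> A i j = 0)}"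

definition Ediag :: "mat \<Rightarrow> mat" where
  "Ediag A = (\<lambda>i j. if i = j then A i i else 0)"

definition fcoeff :: "mat \<Rightarrow> int \<Rightarrow> mat" where
  "fcoeff A n = Ediag (mmul A (bshift (- n)))"

definition Linfty :: "(real \<Rightarrow> complex) set" where
  "Linfty = {f. f \<in> borel_measurable (lebesgue_on {0..2*pi}) \<and>
      (\<exists>C. AE t in lebesgue_on {0..2*pi}. cmod (f t) \<le> C)}"

definition fourier :: "(real \<Rightarrow> complex) \<Rightarrow> int \<Rightarrow> complex" where
  "fourier f n = complex_of_real (1 / (2*pi)) *
      integral\<^sup>L (lebesgue_on {0..2*pi}) (\<lambda>t. f t * exp (- \<i> * of_int n * of_real t))"

definition Laurent :: "mat set" where
  "Laurent = {(\<lambda>i j. fourier f (i - j)) | f. f \<in> Linfty}"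

definition cnonneg :: "complex \<Rightarrow> bool" where
  "cnonneg z \<longleftrightarrow> Im z = 0 \<and> Re z \<ge> 0"

definition block_pos :: "nat \<Rightarrow> (nat \<Rightarrow> nat \<Rightarrow> mat) \<Rightarrow> bool" where
  "block_pos n M \<longleftrightarrow> (\<forall>x :: nat \<Rightarrow> int \<Rightarrow> complex. (\<forall>k<n. finsupp (x k)) \<longrightarrow>
     cnonneg (\<Sum>k<n. \<Sum>l<n. \<Sum>i\<in>supp (x k). \<Sum>j\<in>supp (x l).
        cnj (x k i) * M k l i j * x l j))"

definition linear_on :: "mat set \<Rightarrow> (mat \<Rightarrow> mat) \<Rightarrow> bool" where
  "linear_on S \<Phi> \<longleftrightarrow> (\<forall>A\<in>S. \<forall>C\<in>S. \<forall>a b :: complex.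
     \<Phi> (\<lambda>i j. a * A i j + b * C i j) = (\<lambda>i j. a * \<Phi> A i j + b * \<Phi> C i j))"

definition cp_on :: "mat set \<Rightarrow> (mat \<Rightarrow> mat) \<Rightarrow> bool" where
  "cp_on S \<Phi> \<longleftrightarrow> linear_on S \<Phi> \<and>
     (\<forall>n M. (\<forall>k<n. \<forall>l<n. M k l \<in> S) \<longrightarrow> block_pos n M \<longrightarrow> block_pos n (\<lambda>k l. \<Phi> (M k l)))"

definition ucp_on :: "mat set \<Rightarrow> (mat \<Rightarrow> mat) \<Rightarrow> bool" where
  "ucp_on S \<Phi> \<longleftrightarrow> \<Phi> ` S \<subseteq> S \<and> cp_on S \<Phi> \<and> \<Phi> idm = idm"

end

theory Submission
  imports Defs
begin

(* Let phi g = \<Phi> (diag g) 0 0. This is a state on bounded functions Z -> C, and covariance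
   gives \<Phi> (diag g) i i = phi (g (_ + i)). The extension averages each diagonal of A with phi:
   Gamma A i j = phi (m |-> A (i + m) (j + m)). Its n-th Fourier coefficient is then
   \<Phi> (hat A n), which also gives idempotence. Every translate (A (i + m) (j + m)) has the
   sesquilinear bound and the positivity of A, and phi is positive and contractive for the sup norm,
   so Gamma is bounded and completely positive. Finally the rows and columns of a Laurent matrix are
   square summable by Bessel's inequality, and phi commutes with square summable combinations of
   uniformly square summable families; this gives the bimodule property. *)

section \<open>Shifts, diagonals and Fourier coefficients\<close>

lemma infsum_if_eq: "infsum (\<lambda>l. if l = a then (f l :: complex) else 0) UNIV = f a"
proof -
  have "infsum (\<lambda>l. if l = a then f l else 0) UNIV = infsum (\<lambda>l. if l = a then f l else 0) {a}"
    by (rule infsum_cong_neutral) auto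
  then show ?thesis by simp
qed

lemma mmul_bshift_left: "mmul (bshift k) M i j = M (i - k) j"
proof -
  have "mmul (bshift k) M i j = infsum (\<lambda>l. if l = i - k then M l j else 0) UNIV"
    unfolding mmul_def bshift_def by (rule infsum_cong) auto
  then show ?thesis by (simp add: infsum_if_eq)
qed

lemma mmul_bshift_right: "mmul M (bshift k) i j = M i (j + k)"
proof -
  have "mmul M (bshift k) i j = infsum (\<lambda>l. if l = j + k then M i l else 0) UNIV"
    unfolding mmul_def bshift_def by (rule infsum_cong) auto
  then show ?thesis by (simp add: infsum_if_eq)
qed

lemma bshift_conj_apply: "mmul (mmul (bshift 1) D) (bshift (-1)) = (\<lambda>i j. D (i - 1) (j - 1))"
  by (auto simp: mmul_bshift_right mmul_bshift_left fun_eq_iff)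

definition diag_mat :: "(int \<Rightarrow> complex) \<Rightarrow> mat" where
  "diag_mat g = (\<lambda>i j. if i = j then g i else 0)"

lemma diag_mat_one: "diag_mat (\<lambda>_. 1) = idm"
  unfolding diag_mat_def idm_def by auto

lemma fcoeff_eq_diag_mat: "fcoeff A n = diag_mat (\<lambda>m. A m (m - n))"
  unfolding fcoeff_def Ediag_def diag_mat_def by (auto simp: mmul_bshift_right fun_eq_iff)

lemma mat_eq_fcoeff: "A i j = fcoeff A (i - j) i i"
  by (simp add: fcoeff_eq_diag_mat diag_mat_def)

section \<open>Bounded matrices as bounded sesquilinear forms\<close>

abbreviation L2_cmod :: "('a \<Rightarrow> complex) \<Rightarrow> 'a set \<Rightarrow> real" where
  "L2_cmod u F \<equiv> L2_set (\<lambda>i. cmod (u i)) F"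

lemma L2_cmod_square: "(L2_cmod u F)\<^sup>2 = (\<Sum>i\<in>F. (cmod (u i))\<^sup>2)"
  unfolding L2_set_def by (simp add: sum_nonneg)

lemma L2_cmod_le: "(\<Sum>i\<in>F. (cmod (u i))\<^sup>2) \<le> C \<Longrightarrow> L2_cmod u F \<le> sqrt C"
  unfolding L2_set_def by simp

lemma norm_sum_mult_le_L2: "cmod (\<Sum>i\<in>F. u i * v i) \<le> L2_cmod u F * L2_cmod v F"
proof -
  have "cmod (\<Sum>i\<in>F. u i * v i) \<le> (\<Sum>i\<in>F. \<bar>cmod (u i)\<bar> * \<bar>cmod (v i)\<bar>)"
    by (rule order_trans[OF norm_sum]) (simp add: norm_mult)
  also have "\<dots> \<le> L2_cmod u F * L2_cmod v F"
    by (rule L2_set_mult_ineq)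
  finally show ?thesis .
qed

lemma le_square_of_le_mult_sqrt:
  fixes S K :: real
  assumes "S \<ge> 0" "K \<ge> 0" "S \<le> K * sqrt S"
  shows "S \<le> K\<^sup>2"
proof (cases "S = 0")
  case False
  have "sqrt S * sqrt S \<le> K * sqrt S" using assms by simp
  moreover have "sqrt S > 0" using False assms by simp
  ultimately have "sqrt S \<le> K" by (rule mult_right_le_imp_le)
  then show ?thesis using assms by (metis real_sqrt_le_iff real_sqrt_pow2 real_sqrt_power)
qed (use assms in simp)

lemma cnj_mult_self: "cnj z * z = complex_of_real ((cmod z)\<^sup>2)"
  by (metis complex_norm_square mult.commute)

definition form_bounded :: "mat \<Rightarrow> real \<Rightarrow> bool" where
  "form_bounded A K \<longleftrightarrow> K \<ge> 0 \<and> (\<forall>F G u v. finite F \<longrightarrow> finite G \<longrightarrow>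
     cmod (\<Sum>i\<in>F. \<Sum>j\<in>G. cnj (u i) * A i j * v j) \<le> K * L2_cmod u F * L2_cmod v G)"

lemma form_boundedD:
  assumes "form_bounded A K" "finite F" "finite G"
  shows "cmod (\<Sum>i\<in>F. \<Sum>j\<in>G. cnj (u i) * A i j * v j) \<le> K * L2_cmod u F * L2_cmod v G"
  using assms unfolding form_bounded_def by blast

lemma form_bounded_nonneg: "form_bounded A K \<Longrightarrow> K \<ge> 0"
  unfolding form_bounded_def by blast

lemma mapply_restrict:
  assumes "finite G"
  shows "mapply A (\<lambda>j. if j \<in> G then v j else 0) i = (\<Sum>j\<in>G. A i j * v j)"
proof -
  let ?x = "\<lambda>j. if j \<in> G then v j else 0"
  have "supp ?x \<subseteq> G" unfolding supp_def by auto
  then have "(\<Sum>j\<in>supp ?x. A i j * ?x j) = (\<Sum>j\<in>G. A i j * ?x j)"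
    by (intro sum.mono_neutral_left assms) (auto simp: supp_def)
  then show ?thesis unfolding mapply_def by simp
qed

lemma bounded_mat_imp_form_bounded:
  assumes "bounded_mat A"
  shows "\<exists>K. form_bounded A K"
proof -
  obtain C where C: "\<And>x F. finsupp x \<Longrightarrow> finite F \<Longrightarrow>
      (\<Sum>i\<in>F. (cmod (mapply A x i))\<^sup>2) \<le> C * (\<Sum>j\<in>supp x. (cmod (x j))\<^sup>2)"
    using assms unfolding bounded_mat_def by blast
  define K where "K = sqrt (max C 0)"
  have "form_bounded A K"
    unfolding form_bounded_def
  proof (intro conjI allI impI)
    show "K \<ge> 0" unfolding K_def by simp
    fix F G :: "int set" and u v :: "int \<Rightarrow> complex"
    assume F: "finite F" and G: "finite G"
    define x where "x = (\<lambda>j. if j \<in> G then v j else 0)"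
    define y where "y = mapply A x"
    have sx: "supp x \<subseteq> G" unfolding supp_def x_def by auto
    then have fx: "finsupp x" unfolding finsupp_def supp_def[symmetric] using G finite_subset by blast
    have "(\<Sum>i\<in>F. \<Sum>j\<in>G. cnj (u i) * A i j * v j) = (\<Sum>i\<in>F. cnj (u i) * y i)"
      unfolding y_def x_def mapply_restrict[OF G] by (simp add: sum_distrib_left mult.assoc)
    then have "cmod (\<Sum>i\<in>F. \<Sum>j\<in>G. cnj (u i) * A i j * v j) \<le> L2_cmod u F * L2_cmod y F"
      using norm_sum_mult_le_L2[of "\<lambda>i. cnj (u i)" y F] by simp
    also have "L2_cmod y F \<le> K * L2_cmod v G"
    proof (rule power2_le_imp_le)
      have "(L2_cmod y F)\<^sup>2 \<le> max C 0 * (\<Sum>j\<in>supp x. (cmod (x j))\<^sup>2)"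
        unfolding L2_cmod_square y_def
        by (rule order_trans[OF C[OF fx F]]) (intro mult_right_mono; simp add: sum_nonneg)
      also have "(\<Sum>j\<in>supp x. (cmod (x j))\<^sup>2) \<le> (\<Sum>j\<in>G. (cmod (v j))\<^sup>2)"
        using sx by (subst sum.cong[OF refl, of _ _ "\<lambda>j. (cmod (v j))\<^sup>2"])
          (auto simp: x_def intro!: sum_mono2 G)
      then have "max C 0 * (\<Sum>j\<in>supp x. (cmod (x j))\<^sup>2) \<le> (K * L2_cmod v G)\<^sup>2"
        unfolding K_def power_mult_distrib L2_cmod_square by (simp add: mult_left_mono)
      finally show "(L2_cmod y F)\<^sup>2 \<le> (K * L2_cmod v G)\<^sup>2" .
    qed (simp add: K_def)
    then have "L2_cmod u F * L2_cmod y F \<le> L2_cmod u F * (K * L2_cmod v G)"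
      by (simp add: mult_left_mono)
    finally show "cmod (\<Sum>i\<in>F. \<Sum>j\<in>G. cnj (u i) * A i j * v j) \<le> K * L2_cmod u F * L2_cmod v G"
      by (simp add: mult_ac)
  qed
  then show ?thesis by blast
qed

lemma form_bounded_imp_bounded_mat:
  assumes "form_bounded A K"
  shows "bounded_mat A"
  unfolding bounded_mat_def
proof (intro exI allI impI)
  fix x :: "int \<Rightarrow> complex" and F :: "int set" assume fx: "finsupp x" and F: "finite F"
  have fs: "finite (supp x)" using fx unfolding finsupp_def supp_def .
  define y where "y = mapply A x"
  define S where "S = (\<Sum>i\<in>F. (cmod (y i))\<^sup>2)"
  have "(\<Sum>i\<in>F. \<Sum>j\<in>supp x. cnj (y i) * A i j * x j) = (\<Sum>i\<in>F. cnj (y i) * y i)"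
    unfolding y_def mapply_def by (simp add: sum_distrib_left mult.assoc)
  also have "\<dots> = of_real S"
    unfolding S_def of_real_sum by (simp add: cnj_mult_self)
  finally have eq: "(\<Sum>i\<in>F. \<Sum>j\<in>supp x. cnj (y i) * A i j * x j) = of_real S" .
  have "S \<ge> 0" unfolding S_def by (simp add: sum_nonneg)
  then have "S = cmod (\<Sum>i\<in>F. \<Sum>j\<in>supp x. cnj (y i) * A i j * x j)"
    unfolding eq by simp
  also have "\<dots> \<le> K * L2_cmod y F * L2_cmod x (supp x)"
    by (rule form_boundedD[OF assms F fs])
  finally have "S \<le> K * L2_cmod y F * L2_cmod x (supp x)" .
  then have "S \<le> (K * L2_cmod x (supp x)) * sqrt S"
    unfolding S_def L2_set_def by (simp add: mult_ac)
  then have "S \<le> (K * L2_cmod x (supp x))\<^sup>2"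
    by (intro le_square_of_le_mult_sqrt) (auto simp: S_def sum_nonneg form_bounded_nonneg[OF assms])
  then show "(\<Sum>i\<in>F. (cmod (mapply A x i))\<^sup>2) \<le> K\<^sup>2 * (\<Sum>j\<in>supp x. (cmod (x j))\<^sup>2)"
    unfolding S_def y_def by (simp add: power_mult_distrib L2_cmod_square)
qed

lemma bounded_mat_iff_form_bounded: "bounded_mat A \<longleftrightarrow> (\<exists>K. form_bounded A K)"
  using bounded_mat_imp_form_bounded form_bounded_imp_bounded_mat by blast

lemma form_bounded_adjoint:
  assumes "form_bounded A K"
  shows "form_bounded (\<lambda>i j. cnj (A j i)) K"
  unfolding form_bounded_def
proof (intro conjI allI impI)
  fix F G :: "int set" and u v :: "int \<Rightarrow> complex"
  assume F: "finite F" and G: "finite G"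
  have "(\<Sum>i\<in>F. \<Sum>j\<in>G. cnj (u i) * cnj (A j i) * v j) = cnj (\<Sum>j\<in>G. \<Sum>i\<in>F. cnj (v j) * A j i * u i)"
    by (simp add: cnj_sum sum.swap[of _ F] mult_ac)
  then have "cmod (\<Sum>i\<in>F. \<Sum>j\<in>G. cnj (u i) * cnj (A j i) * v j) = cmod (\<Sum>j\<in>G. \<Sum>i\<in>F. cnj (v j) * A j i * u i)"
    by (simp only: complex_mod_cnj)
  also have "\<dots> \<le> K * L2_cmod v G * L2_cmod u F"
    by (rule form_boundedD[OF assms G F])
  finally show "cmod (\<Sum>i\<in>F. \<Sum>j\<in>G. cnj (u i) * cnj (A j i) * v j) \<le> K * L2_cmod u F * L2_cmod v G"
    by (simp add: mult_ac)
qed (rule form_bounded_nonneg[OF assms])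

lemma form_bounded_column:
  assumes "form_bounded A K" "finite H"
  shows "(\<Sum>i\<in>H. (cmod (A i j))\<^sup>2) \<le> K\<^sup>2"
proof -
  define S where "S = (\<Sum>i\<in>H. (cmod (A i j))\<^sup>2)"
  have eq: "(\<Sum>i\<in>H. \<Sum>j'\<in>{j}. cnj (A i j) * A i j' * 1) = of_real S"
    unfolding S_def of_real_sum by (simp add: cnj_mult_self)
  have "S \<ge> 0" unfolding S_def by (simp add: sum_nonneg)
  then have "S = cmod (\<Sum>i\<in>H. \<Sum>j'\<in>{j}. cnj (A i j) * A i j' * 1)"
    unfolding eq by simp
  also have "\<dots> \<le> K * L2_cmod (\<lambda>i. A i j) H * L2_cmod (\<lambda>_. 1) {j}"
    by (rule form_boundedD[OF assms(1,2)]) simp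
  finally have "S \<le> K * L2_cmod (\<lambda>i. A i j) H" by simp
  then have "S \<le> K * sqrt S" by (simp add: L2_set_def S_def)
  then show ?thesis unfolding S_def[symmetric]
    by (intro le_square_of_le_mult_sqrt) (auto simp: S_def sum_nonneg form_bounded_nonneg[OF assms(1)])
qed

lemma form_bounded_row:
  assumes "form_bounded A K" "finite H"
  shows "(\<Sum>j\<in>H. (cmod (A i j))\<^sup>2) \<le> K\<^sup>2"
  using form_bounded_column[OF form_bounded_adjoint[OF assms(1)] assms(2)] by simp

lemma form_bounded_entry:
  assumes "form_bounded A K"
  shows "cmod (A i j) \<le> K"
proof -
  have "(cmod (A i j))\<^sup>2 \<le> K\<^sup>2" using form_bounded_column[OF assms, of "{i}" j] by simp
  then show ?thesis by (rule power2_le_imp_le) (rule form_bounded_nonneg[OF assms])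
qed

lemma BL_form_bounded: "A \<in> BL \<Longrightarrow> \<exists>K. form_bounded A K"
  unfolding BL_def by (simp add: bounded_mat_iff_form_bounded)

section \<open>States on bounded functions\<close>

lemma bounded_rangeI: "(\<And>m. norm (g m) \<le> C) \<Longrightarrow> bounded (range g)"
  unfolding bounded_iff by blast

lemma bounded_range_comp: "bounded (range g) \<Longrightarrow> bounded (range (\<lambda>m. g (h m)))"
  by (rule bounded_subset) auto

lemma bounded_range_mult:
  fixes g :: "'a \<Rightarrow> complex"
  assumes "bounded (range g)"
  shows "bounded (range (\<lambda>m. c * g m))" "bounded (range (\<lambda>m. g m * c))"
proof -
  obtain C where "\<And>m. cmod (g m) \<le> C" using assms unfolding bounded_iff by blast
  then have "cmod (c * g m) \<le> cmod c * C" for m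
    unfolding norm_mult by (simp add: mult_left_mono)
  then show "bounded (range (\<lambda>m. c * g m))" "bounded (range (\<lambda>m. g m * c))"
    by (auto intro: bounded_rangeI simp: mult.commute)
qed

lemma bounded_range_sum:
  fixes f :: "'s \<Rightarrow> 'a \<Rightarrow> complex"
  shows "(\<And>s. s \<in> S \<Longrightarrow> bounded (range (f s))) \<Longrightarrow> bounded (range (\<lambda>m. \<Sum>s\<in>S. f s m))"
proof (induction S rule: infinite_finite_induct)
  case (insert x F)
  then show ?case by (simp add: bounded_plus_comp)
qed auto

lemma bounded_range_Re_Im:
  assumes "bounded (range g)"
  shows "bounded (range (\<lambda>m. complex_of_real (Re (g m))))"
    and "bounded (range (\<lambda>m. complex_of_real (Im (g m))))"
proof -
  obtain C where "\<And>m. cmod (g m) \<le> C" using assms unfolding bounded_iff by blast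
  then show "bounded (range (\<lambda>m. complex_of_real (Re (g m))))"
    and "bounded (range (\<lambda>m. complex_of_real (Im (g m))))"
    by (auto intro!: bounded_rangeI[of _ C] abs_Re_le_cmod abs_Im_le_cmod intro: order_trans)
qed

lemma cnonneg_sum: "(\<And>s. s \<in> S \<Longrightarrow> cnonneg (f s)) \<Longrightarrow> cnonneg (\<Sum>s\<in>S. f s)"
  by (induction S rule: infinite_finite_induct) (auto simp: cnonneg_def)

locale linf_state =
  fixes \<phi> :: "('a \<Rightarrow> complex) \<Rightarrow> complex"
  assumes linear: "bounded (range g) \<Longrightarrow> bounded (range h) \<Longrightarrow>
      \<phi> (\<lambda>m. a * g m + b * h m) = a * \<phi> g + b * \<phi> h"
    and positive: "bounded (range g) \<Longrightarrow> \<forall>m. cnonneg (g m) \<Longrightarrow> cnonneg (\<phi> g)"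
    and unital: "\<phi> (\<lambda>_. 1) = 1"
begin

lemma state_zero: "\<phi> (\<lambda>_. 0) = 0"
  using linear[of "\<lambda>_. 0" "\<lambda>_. 0" 0 0] by simp

lemma state_add: "bounded (range g) \<Longrightarrow> bounded (range h) \<Longrightarrow> \<phi> (\<lambda>m. g m + h m) = \<phi> g + \<phi> h"
  using linear[of g h 1 1] by simp

lemma state_diff: "bounded (range g) \<Longrightarrow> bounded (range h) \<Longrightarrow> \<phi> (\<lambda>m. g m - h m) = \<phi> g - \<phi> h"
  using linear[of g h 1 "-1"] by simp

lemma state_scale: "bounded (range g) \<Longrightarrow> \<phi> (\<lambda>m. c * g m) = c * \<phi> g"
  using linear[of g g c 0] by simp

lemma state_const: "\<phi> (\<lambda>_. c) = c"
  using state_scale[of "\<lambda>_. 1" c] unital by simp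

lemma state_sum:
  "(\<And>s. s \<in> S \<Longrightarrow> bounded (range (f s))) \<Longrightarrow> \<phi> (\<lambda>m. \<Sum>s\<in>S. f s m) = (\<Sum>s\<in>S. \<phi> (f s))"
proof (induction S rule: infinite_finite_induct)
  case (insert x F)
  then have "\<phi> (\<lambda>m. f x m + (\<Sum>s\<in>F. f s m)) = \<phi> (f x) + \<phi> (\<lambda>m. \<Sum>s\<in>F. f s m)"
    by (intro state_add bounded_range_sum) auto
  then show ?case using insert by simp
qed (simp_all add: state_zero)

lemma state_double_sum:
  assumes "\<And>i j. bounded (range (X i j))"
  shows "\<phi> (\<lambda>m. \<Sum>i\<in>F. \<Sum>j\<in>G. a i * X i j m * b j) = (\<Sum>i\<in>F. \<Sum>j\<in>G. a i * \<phi> (X i j) * b j)"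
proof -
  have "\<phi> (\<lambda>m. \<Sum>i\<in>F. \<Sum>j\<in>G. a i * X i j m * b j) = \<phi> (\<lambda>m. \<Sum>i\<in>F. \<Sum>j\<in>G. (a i * b j) * X i j m)"
    by (simp add: mult_ac)
  also have "\<dots> = (\<Sum>i\<in>F. \<Sum>j\<in>G. (a i * b j) * \<phi> (X i j))"
    using assms by (simp add: state_sum state_scale bounded_range_sum bounded_range_mult)
  finally show ?thesis by (simp add: mult_ac)
qed

lemma state_real_le:
  assumes "bounded (range g)" "\<And>m. Im (g m) = 0" "\<And>m. Re (g m) \<le> C"
  shows "Im (\<phi> g) = 0 \<and> Re (\<phi> g) \<le> C"
proof -
  have "cnonneg (\<phi> (\<lambda>m. complex_of_real C - g m))"
    using assms by (intro positive bounded_minus_comp) (auto simp: cnonneg_def)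
  moreover have "\<phi> (\<lambda>m. complex_of_real C - g m) = complex_of_real C - \<phi> g"
    using assms by (simp add: state_diff state_const)
  ultimately show ?thesis unfolding cnonneg_def by simp
qed

lemma norm_state_le:
  assumes C: "\<And>m. cmod (g m) \<le> C"
  shows "cmod (\<phi> g) \<le> C"
proof (cases "\<phi> g = 0")
  case True
  then show ?thesis using order_trans[OF norm_ge_zero C[of undefined]] by simp
next
  case False
  have bg: "bounded (range g)" using C by (rule bounded_rangeI)
  \<comment> \<open>Rotate \<open>g\<close> so that \<open>\<phi> g\<close> becomes real and nonnegative; positivity then bounds its real part.\<close>
  define \<theta> where "\<theta> = cnj (\<phi> g) / complex_of_real (cmod (\<phi> g))"
  define h where "h = (\<lambda>m. \<theta> * g m)"
  have bh: "bounded (range h)" unfolding h_def using bg by (rule bounded_range_mult)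
  have "\<phi> h = \<theta> * \<phi> g" unfolding h_def using bg by (rule state_scale)
  also have "\<dots> = complex_of_real (cmod (\<phi> g))" unfolding \<theta>_def using False
    by (simp add: complex_norm_square[symmetric] power2_eq_square field_simps mult.commute[of _ "cnj _"])
  finally have \<phi>h: "\<phi> h = complex_of_real (cmod (\<phi> g))" .
  have h_le: "cmod (h m) \<le> C" for m
    unfolding h_def norm_mult using False C[of m] by (simp add: \<theta>_def norm_divide)
  have "(\<lambda>m. 1 * complex_of_real (Re (h m)) + \<i> * complex_of_real (Im (h m))) = h"
    by (auto simp: fun_eq_iff complex_eq_iff)
  with linear[OF bounded_range_Re_Im[OF bh], of 1 \<i>]
  have "\<phi> h = \<phi> (\<lambda>m. complex_of_real (Re (h m))) + \<i> * \<phi> (\<lambda>m. complex_of_real (Im (h m)))"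
    by simp
  moreover have "Im (\<phi> (\<lambda>m. complex_of_real (Re (h m)))) = 0 \<and> Re (\<phi> (\<lambda>m. complex_of_real (Re (h m)))) \<le> C"
    using bounded_range_Re_Im(1)[OF bh]
  proof (rule state_real_le)
    show "Re (complex_of_real (Re (h m))) \<le> C" for m
      using complex_Re_le_cmod[of "h m"] h_le[of m] by simp
  qed simp
  moreover have "Im (\<phi> (\<lambda>m. complex_of_real (Im (h m)))) = 0 \<and> Re (\<phi> (\<lambda>m. complex_of_real (Im (h m)))) \<le> C"
    using bounded_range_Re_Im(2)[OF bh]
  proof (rule state_real_le)
    show "Re (complex_of_real (Im (h m))) \<le> C" for m
      using abs_Im_le_cmod[of "h m"] h_le[of m] by simp
  qed simp
  ultimately have "Re (\<phi> h) \<le> C" by simp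
  then show ?thesis using \<phi>h by simp
qed

end

lemma L2_tail_small:
  fixes a :: "'b \<Rightarrow> complex"
  assumes a: "\<And>H. finite H \<Longrightarrow> (\<Sum>k\<in>H. (cmod (a k))\<^sup>2) \<le> C" and \<delta>: "\<delta> > 0"
  shows "\<exists>F0. finite F0 \<and> (\<forall>H. finite H \<longrightarrow> H \<inter> F0 = {} \<longrightarrow> L2_cmod a H \<le> \<delta>)"
proof -
  let ?q = "\<lambda>k. (cmod (a k))\<^sup>2"
  have sq: "?q summable_on UNIV"
    by (rule nonneg_bdd_above_summable_on) (auto intro!: bdd_aboveI[of _ C] a)
  obtain F0 where F0: "finite F0" "dist (sum ?q F0) (infsum ?q UNIV) \<le> \<delta>\<^sup>2"
    using has_sum_finite_approximation[OF has_sum_infsum[OF sq], of "\<delta>\<^sup>2"] \<delta> by auto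
  have "L2_cmod a H \<le> \<delta>" if H: "finite H" "H \<inter> F0 = {}" for H
  proof -
    have "sum ?q H + sum ?q F0 = sum ?q (H \<union> F0)" using H F0 by (simp add: sum.union_disjoint)
    also have "\<dots> \<le> infsum ?q UNIV" using H F0 sq by (intro finite_sum_le_infsum) auto
    finally have "sum ?q H \<le> \<delta>\<^sup>2" using F0(2) by (simp add: dist_real_def)
    then show ?thesis using L2_cmod_le \<delta> by fastforce
  qed
  then show ?thesis using F0 by blast
qed

lemma norm_has_sum_le:
  fixes f :: "'a \<Rightarrow> complex"
  assumes "(f has_sum S) X" "\<And>H. finite H \<Longrightarrow> H \<subseteq> X \<Longrightarrow> cmod (sum f H) \<le> B"
  shows "cmod S \<le> B"
proof -
  have "((\<lambda>H. cmod (sum f H)) \<longlongrightarrow> cmod S) (finite_subsets_at_top X)"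
    using assms(1) unfolding has_sum_def by (rule tendsto_norm)
  moreover have "eventually (\<lambda>H. cmod (sum f H) \<le> B) (finite_subsets_at_top X)"
    unfolding eventually_finite_subsets_at_top using assms(2) by blast
  ultimately show ?thesis
    by (intro tendsto_upperbound) (auto simp: finite_subsets_at_top_neq_bot)
qed

lemma norm_sum_minus_infsum_le:
  fixes f :: "'a \<Rightarrow> complex"
  assumes f: "f summable_on UNIV" and F: "finite F"
    and tail: "\<And>H. finite H \<Longrightarrow> H \<inter> F = {} \<Longrightarrow> cmod (sum f H) \<le> B"
  shows "cmod (sum f F - infsum f UNIV) \<le> B"
proof -
  have tail_summable: "f summable_on (UNIV - F)"
    by (rule summable_on_subset_banach[OF f]) auto
  have "(f has_sum (sum f F + infsum f (UNIV - F))) (F \<union> (UNIV - F))"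
    by (intro has_sum_Un_disjoint has_sum_infsum tail_summable) (auto simp: F)
  then have "infsum f UNIV = sum f F + infsum f (UNIV - F)"
    by (simp add: infsumI)
  moreover have "cmod (infsum f (UNIV - F)) \<le> B"
    by (rule norm_has_sum_le[OF has_sum_infsum[OF tail_summable]]) (auto intro: tail)
  ultimately show ?thesis by (simp add: norm_minus_commute)
qed

lemma L2_mult_summable:
  fixes a b :: "'a \<Rightarrow> complex"
  assumes "\<And>H. finite H \<Longrightarrow> (\<Sum>k\<in>H. (cmod (a k))\<^sup>2) \<le> Ca"
    and "\<And>H. finite H \<Longrightarrow> (\<Sum>k\<in>H. (cmod (b k))\<^sup>2) \<le> Cb"
  shows "(\<lambda>k. a k * b k) summable_on UNIV"
proof (rule abs_summable_summable)
  have "Ca \<ge> 0" using assms(1)[of "{}"] by simp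
  have "(\<Sum>k\<in>H. norm (a k * b k)) \<le> sqrt Ca * sqrt Cb" if "finite H" for H
  proof -
    have "(\<Sum>k\<in>H. norm (a k * b k)) \<le> L2_cmod a H * L2_cmod b H"
      using L2_set_mult_ineq[where f="\<lambda>k. cmod (a k)" and g="\<lambda>k. cmod (b k)" and A=H]
      by (simp add: norm_mult)
    also have "\<dots> \<le> sqrt Ca * sqrt Cb"
      using \<open>Ca \<ge> 0\<close> by (intro mult_mono L2_cmod_le assms that) auto
    finally show ?thesis .
  qed
  then show "(\<lambda>k. norm (a k * b k)) summable_on UNIV"
    unfolding abs_summable_iff_bdd_above by (intro bdd_aboveI[of _ "sqrt Ca * sqrt Cb"]) auto
qed

context linf_state
begin

text \<open>A state commutes with sums \<open>\<Sum>\<^sub>k a\<^sub>k G\<^sub>k\<close> whose coefficients are square summable and whose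
  terms are uniformly square summable: the partial sums then converge uniformly, and \<open>\<phi>\<close> is
  contractive for the sup norm.\<close>
lemma state_infsum:
  fixes a :: "'b \<Rightarrow> complex" and G :: "'b \<Rightarrow> 'a \<Rightarrow> complex"
  assumes a: "\<And>H. finite H \<Longrightarrow> (\<Sum>k\<in>H. (cmod (a k))\<^sup>2) \<le> Ca"
    and G: "\<And>m H. finite H \<Longrightarrow> (\<Sum>k\<in>H. (cmod (G k m))\<^sup>2) \<le> K"
  shows "(\<Sum>\<^sub>\<infinity>k. a k * \<phi> (G k)) = \<phi> (\<lambda>m. \<Sum>\<^sub>\<infinity>k. a k * G k m)"
proof -
  define T where "T m = (\<Sum>\<^sub>\<infinity>k. a k * G k m)" for m
  have K: "K \<ge> 0" using G[of "{}"] by simp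
  have summable: "(\<lambda>k. a k * G k m) summable_on UNIV" for m
    using a G by (rule L2_mult_summable)
  have partial: "cmod (\<Sum>k\<in>H. a k * G k m) \<le> L2_cmod a H * sqrt K" if "finite H" for H m
    using norm_sum_mult_le_L2[of a "\<lambda>k. G k m" H] L2_cmod_le[OF G[OF that]]
    by (meson L2_set_nonneg mult_left_mono order_trans)
  have bounded_G: "bounded (range (G k))" for k
  proof (rule bounded_rangeI)
    show "cmod (G k m) \<le> sqrt K" for m
      using G[of "{k}" m] by (simp add: real_le_rsqrt)
  qed
  have bounded_T: "bounded (range T)"
  proof (rule bounded_rangeI)
    fix m
    show "cmod (T m) \<le> sqrt Ca * sqrt K"
      unfolding T_def
    proof (rule norm_has_sum_le[OF has_sum_infsum[OF summable]])
      fix H :: "'b set" assume H: "finite H"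
      show "cmod (sum (\<lambda>k. a k * G k m) H) \<le> sqrt Ca * sqrt K"
        using partial[OF H, of m] L2_cmod_le[OF a[OF H]] K
        by (meson mult_right_mono order_trans real_sqrt_ge_zero)
    qed
  qed
  have "((\<lambda>k. a k * \<phi> (G k)) has_sum \<phi> T) UNIV"
    unfolding has_sum_def tendsto_iff
  proof (intro allI impI)
    fix e :: real assume e: "e > 0"
    define \<delta> where "\<delta> = e / (sqrt K + 1)"
    have "sqrt K + 1 > 0" using K by (simp add: add_nonneg_pos)
    then have \<delta>: "\<delta> > 0" "\<delta> * sqrt K < e"
      using e by (auto simp: \<delta>_def field_simps)
    obtain F0 where F0: "finite F0" and tail: "\<And>H. finite H \<Longrightarrow> H \<inter> F0 = {} \<Longrightarrow> L2_cmod a H \<le> \<delta>"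
      using L2_tail_small[OF a \<delta>(1)] by blast
    show "\<forall>\<^sub>F F in finite_subsets_at_top UNIV. dist (\<Sum>k\<in>F. a k * \<phi> (G k)) (\<phi> T) < e"
      unfolding eventually_finite_subsets_at_top
    proof (intro exI[of _ F0] conjI allI impI)
      fix F assume F: "finite F \<and> F0 \<subseteq> F \<and> F \<subseteq> UNIV"
      have bounded_partial: "bounded (range (\<lambda>m. \<Sum>k\<in>F. a k * G k m))"
        using bounded_G by (intro bounded_range_sum bounded_range_mult)
      have "(\<Sum>k\<in>F. a k * \<phi> (G k)) - \<phi> T = \<phi> (\<lambda>m. (\<Sum>k\<in>F. a k * G k m) - T m)"
        using bounded_G bounded_partial bounded_T
        by (simp add: state_diff state_sum state_scale bounded_range_mult)
      also have "cmod \<dots> \<le> \<delta> * sqrt K"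
      proof (rule norm_state_le)
        fix m
        have "cmod (\<Sum>k\<in>H. a k * G k m) \<le> \<delta> * sqrt K" if H: "finite H" "H \<inter> F = {}" for H
        proof -
          have "L2_cmod a H \<le> \<delta>" using tail[OF H(1)] H(2) F by blast
          then show ?thesis using partial[OF H(1), of m] K
            by (meson mult_right_mono order_trans real_sqrt_ge_zero)
        qed
        then show "cmod ((\<Sum>k\<in>F. a k * G k m) - T m) \<le> \<delta> * sqrt K"
          unfolding T_def using F by (intro norm_sum_minus_infsum_le summable) auto
      qed
      finally show "dist (\<Sum>k\<in>F. a k * \<phi> (G k)) (\<phi> T) < e"
        using \<delta>(2) by (simp add: dist_norm)
    qed (use F0 in auto)
  qed
  then show ?thesis unfolding T_def by (rule infsumI)
qed

end

section \<open>Bessel's inequality on the circle\<close>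

abbreviation circle :: "real measure" where
  "circle \<equiv> lebesgue_on {0..2*pi}"

definition circle_char :: "int \<Rightarrow> real \<Rightarrow> complex" where
  "circle_char k t = exp (\<i> * of_int k * of_real t)"

lemma borel_measurable_cnj [measurable]:
  "f \<in> borel_measurable M \<Longrightarrow> (\<lambda>x. cnj (f x)) \<in> borel_measurable M"
  using borel_measurable_continuous_onI[OF continuous_on_cnj[OF continuous_on_id]]
    measurable_compose by blast

lemma circle_char_measurable [measurable]: "circle_char k \<in> borel_measurable circle"
  unfolding circle_char_def
  by (intro continuous_imp_measurable_on_sets_lebesgue continuous_intros) auto

lemma norm_circle_char [simp]: "cmod (circle_char k t) = 1"
  unfolding circle_char_def by (simp add: norm_exp_eq_Re)

lemma circle_char_mult_cnj: "circle_char n t * cnj (circle_char m t) = circle_char (n - m) t"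
  unfolding circle_char_def by (simp add: exp_cnj exp_add[symmetric] algebra_simps)

lemma integrable_circle_bounded:
  "h \<in> borel_measurable circle \<Longrightarrow> (\<And>t. cmod (h t) \<le> B) \<Longrightarrow> integrable circle h"
  by (rule finite_measure.integrable_const_bound[OF finite_measure_lebesgue_on, of _ _ B]) auto

lemma integrable_circle_mult_cnj:
  assumes "u \<in> borel_measurable circle" "\<And>t. cmod (u t) \<le> A"
    and "v \<in> borel_measurable circle" "\<And>t. cmod (v t) \<le> B"
  shows "integrable circle (\<lambda>t. u t * cnj (v t))"
proof (rule integrable_circle_bounded)
  show "(\<lambda>t. u t * cnj (v t)) \<in> borel_measurable circle" using assms by measurable
  show "cmod (u t * cnj (v t)) \<le> A * B" for t
    unfolding norm_mult complex_mod_cnj using assms(2,4)[of t]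
    by (intro mult_mono) (auto intro: order_trans[OF norm_ge_zero])
qed

lemma integral_circle_char: "integral\<^sup>L circle (circle_char k) = (if k = 0 then 2 * pi else 0)"
proof -
  have "integrable circle (circle_char k)"
    by (rule integrable_circle_bounded[of _ 1]) auto
  then have eq: "integral\<^sup>L circle (circle_char k) = integral {0..2*pi} (circle_char k)"
    by (rule lebesgue_integral_eq_integral) simp
  show ?thesis
  proof (cases "k = 0")
    case True
    then have "circle_char k = (\<lambda>_. 1)" by (simp add: circle_char_def fun_eq_iff)
    then show ?thesis using eq True by (simp add: scaleR_conv_of_real)
  next
    case False
    define F where "F t = exp (\<i> * of_int k * t) / (\<i> * of_int k)" for t :: complex
    have "(F has_field_derivative exp (\<i> * of_int k * z)) (at z)" for z
      unfolding F_def using False by (auto intro!: derivative_eq_intros simp: field_simps)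
    then have "(circle_char k has_integral (F (of_real (2*pi)) - F (of_real 0))) {0..2*pi}"
      unfolding circle_char_def
      by (intro fundamental_theorem_of_calculus) (auto intro!: has_vector_derivative_real_field)
    moreover have "exp (\<i> * of_int k * of_real (2*pi)) = 1"
      using exp_integer_2pi[of "of_int k"] by (simp add: algebra_simps)
    then have "F (of_real (2*pi)) - F (of_real 0) = 0" unfolding F_def by simp
    ultimately show ?thesis using eq False by (simp add: integral_unique)
  qed
qed

lemma fourier_eq_integral_circle_char:
  "fourier g n = complex_of_real (1 / (2*pi)) * integral\<^sup>L circle (\<lambda>t. g t * cnj (circle_char n t))"
  unfolding fourier_def circle_char_def by (simp add: exp_cnj)

text \<open>The proof expands \<open>0 \<le> \<integral>|g - P|\<^sup>2\<close> for the projection \<open>P = \<Sum>\<^sub>n\<^sub>\<in>\<^sub>N c\<^sub>n e\<^sub>n\<close> of \<open>g\<close>.\<close>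
lemma bessel_inequality:
  assumes gm: "g \<in> borel_measurable circle" and gb: "\<And>t. cmod (g t) \<le> C"
  shows "(\<Sum>n\<in>N. (cmod (fourier g n))\<^sup>2) \<le> integral\<^sup>L circle (\<lambda>t. (cmod (g t))\<^sup>2) / (2 * pi)"
proof (cases "finite N")
  case True
  define c where "c = fourier g"
  define S where "S = (\<Sum>n\<in>N. (cmod (c n))\<^sup>2)"
  define P where "P t = (\<Sum>n\<in>N. c n * circle_char n t)" for t
  note gm [measurable]
  have Pm [measurable]: "P \<in> borel_measurable circle" unfolding P_def by measurable
  have Pb: "cmod (P t) \<le> (\<Sum>n\<in>N. cmod (c n))" for t
    unfolding P_def by (rule order_trans[OF norm_sum]) (simp add: norm_mult)
  have integral_cnj_P: "integral\<^sup>L circle (\<lambda>t. u t * cnj (P t))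
      = (\<Sum>n\<in>N. cnj (c n) * integral\<^sup>L circle (\<lambda>t. u t * cnj (circle_char n t)))"
    if "u \<in> borel_measurable circle" "\<And>t. cmod (u t) \<le> A" for u A
  proof -
    have "(\<lambda>t. u t * cnj (P t)) = (\<lambda>t. \<Sum>n\<in>N. cnj (c n) * (u t * cnj (circle_char n t)))"
      unfolding P_def by (simp add: cnj_sum sum_distrib_left mult_ac)
    moreover have "integrable circle (\<lambda>t. u t * cnj (circle_char n t))" for n
      using that by (intro integrable_circle_mult_cnj[where B=1]) auto
    ultimately show ?thesis by simp
  qed
  have fourier_g: "integral\<^sup>L circle (\<lambda>t. g t * cnj (circle_char n t)) = 2 * pi * c n" for n
    unfolding c_def fourier_eq_integral_circle_char by simp
  have fourier_P: "integral\<^sup>L circle (\<lambda>t. P t * cnj (circle_char n t)) = 2 * pi * c n" if "n \<in> N" for n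
  proof -
    have "(\<lambda>t. P t * cnj (circle_char n t)) = (\<lambda>t. \<Sum>m\<in>N. c m * circle_char (m - n) t)"
      unfolding P_def by (simp add: sum_distrib_right mult.assoc circle_char_mult_cnj)
    moreover have "integrable circle (circle_char k)" for k
      by (rule integrable_circle_bounded[of _ 1]) auto
    ultimately have "integral\<^sup>L circle (\<lambda>t. P t * cnj (circle_char n t))
        = (\<Sum>m\<in>N. c m * (if m = n then 2 * pi else 0))"
      by (simp add: integral_circle_char)
    then show ?thesis by (simp add: sum.remove[OF True that])
  qed
  have norm_sq: "z * cnj z = complex_of_real ((cmod z)\<^sup>2)" for z
    by (rule complex_norm_square[symmetric])
  have norm_sq': "(complex_of_real (cmod z))\<^sup>2 = z * cnj z" for z
    by (metis complex_norm_square of_real_power)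
  have gP: "integral\<^sup>L circle (\<lambda>t. g t * cnj (P t)) = of_real (2 * pi * S)"
    unfolding integral_cnj_P[OF gm gb] fourier_g S_def of_real_mult of_real_sum sum_distrib_left
    by (intro sum.cong refl) (simp add: norm_sq' mult_ac)
  have Pg: "integral\<^sup>L circle (\<lambda>t. P t * cnj (g t)) = of_real (2 * pi * S)"
  proof -
    have "cnj (integral\<^sup>L circle (\<lambda>t. g t * cnj (P t))) = integral\<^sup>L circle (\<lambda>t. cnj (g t * cnj (P t)))"
      by (rule Bochner_Integration.integral_cnj[symmetric])
    also have "\<dots> = integral\<^sup>L circle (\<lambda>t. P t * cnj (g t))"
      by (rule arg_cong[where f="integral\<^sup>L circle"]) (simp add: fun_eq_iff mult.commute)
    finally show ?thesis by (simp add: gP)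
  qed
  have PP: "integral\<^sup>L circle (\<lambda>t. P t * cnj (P t)) = of_real (2 * pi * S)"
  proof -
    have "integral\<^sup>L circle (\<lambda>t. P t * cnj (P t)) = (\<Sum>n\<in>N. cnj (c n) * (2 * pi * c n))"
      unfolding integral_cnj_P[OF Pm Pb] by (intro sum.cong refl) (simp only: fourier_P)
    then show ?thesis
      unfolding S_def of_real_mult of_real_sum sum_distrib_left by (simp add: norm_sq' mult_ac)
  qed
  have "(\<lambda>t. (g t - P t) * cnj (g t - P t))
      = (\<lambda>t. g t * cnj (g t) - g t * cnj (P t) - P t * cnj (g t) + P t * cnj (P t))"
    by (simp add: algebra_simps)
  then have "integral\<^sup>L circle (\<lambda>t. (g t - P t) * cnj (g t - P t))
      = integral\<^sup>L circle (\<lambda>t. g t * cnj (g t)) - integral\<^sup>L circle (\<lambda>t. g t * cnj (P t))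
        - integral\<^sup>L circle (\<lambda>t. P t * cnj (g t)) + integral\<^sup>L circle (\<lambda>t. P t * cnj (P t))"
    using integrable_circle_mult_cnj[OF gm gb gm gb] integrable_circle_mult_cnj[OF gm gb Pm Pb]
      integrable_circle_mult_cnj[OF Pm Pb gm gb] integrable_circle_mult_cnj[OF Pm Pb Pm Pb]
    by (simp add: Bochner_Integration.integral_add Bochner_Integration.integral_diff)
  then have "integral\<^sup>L circle (\<lambda>t. (g t - P t) * cnj (g t - P t))
      = integral\<^sup>L circle (\<lambda>t. g t * cnj (g t)) - of_real (2 * pi * S)"
    unfolding gP Pg PP by simp
  moreover define I where "I = integral\<^sup>L circle (\<lambda>t. (cmod (g t))\<^sup>2)"
  moreover define J where "J = integral\<^sup>L circle (\<lambda>t. (cmod (g t - P t))\<^sup>2)"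
  ultimately have "complex_of_real J = complex_of_real I - complex_of_real (2 * pi * S)"
    unfolding norm_sq integral_complex_of_real by (simp only:)
  then have "J = I - 2 * pi * S"
    by (metis of_real_diff of_real_eq_iff)
  moreover have "J \<ge> 0"
    unfolding J_def by (rule Bochner_Integration.integral_nonneg) simp
  ultimately show ?thesis unfolding S_def c_def I_def[symmetric] by (simp add: field_simps)
qed (simp add: Bochner_Integration.integral_nonneg)

lemma Linfty_fourier_square_bounded:
  assumes "f \<in> Linfty"
  shows "\<exists>C. \<forall>N. finite N \<longrightarrow> (\<Sum>n\<in>N. (cmod (fourier f n))\<^sup>2) \<le> C"
proof -
  have fm [measurable]: "f \<in> borel_measurable circle" using assms unfolding Linfty_def by blast
  obtain C where C: "AE t in circle. cmod (f t) \<le> C" using assms unfolding Linfty_def by blast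
  define g where "g t = (if cmod (f t) \<le> C then f t else 0)" for t
  have gm [measurable]: "g \<in> borel_measurable circle" unfolding g_def by measurable
  have gb: "cmod (g t) \<le> \<bar>C\<bar>" for t unfolding g_def by auto
  have "fourier f n = fourier g n" for n
  proof -
    have "AE t in circle. f t * cnj (circle_char n t) = g t * cnj (circle_char n t)"
      using C by eventually_elim (simp add: g_def)
    then have "integral\<^sup>L circle (\<lambda>t. f t * cnj (circle_char n t))
        = integral\<^sup>L circle (\<lambda>t. g t * cnj (circle_char n t))"
      by (intro integral_cong_AE) measurable
    then show ?thesis unfolding fourier_eq_integral_circle_char by simp
  qed
  then show ?thesis
    using bessel_inequality[OF gm gb] by (intro exI[of _ "integral\<^sup>L circle (\<lambda>t. (cmod (g t))\<^sup>2) / (2 * pi)"]) simp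
qed

section \<open>The covariant extension\<close>

lemma diag_mat_in_Diag:
  assumes "bounded (range g)"
  shows "diag_mat g \<in> Diag"
proof -
  obtain C where C: "\<And>m. cmod (g m) \<le> C" using assms unfolding bounded_iff by blast
  have "bounded_mat (diag_mat g)"
    unfolding bounded_mat_def
  proof (intro exI allI impI)
    fix x :: "int \<Rightarrow> complex" and F :: "int set"
    assume fx: "finsupp x" and F: "finite F"
    have fs: "finite (supp x)" using fx unfolding finsupp_def supp_def .
    have apply_x: "mapply (diag_mat g) x i = g i * x i" for i
    proof (cases "i \<in> supp x")
      case True
      then have "mapply (diag_mat g) x i = (\<Sum>j\<in>{i}. diag_mat g i j * x j)"
        unfolding mapply_def by (intro sum.mono_neutral_right fs) (auto simp: diag_mat_def)
      then show ?thesis by (simp add: diag_mat_def)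
    next
      case False
      then show ?thesis unfolding mapply_def diag_mat_def supp_def by (auto intro!: sum.neutral)
    qed
    have "(\<Sum>i\<in>F. (cmod (mapply (diag_mat g) x i))\<^sup>2) \<le> (\<Sum>i\<in>F. C\<^sup>2 * (cmod (x i))\<^sup>2)"
      unfolding apply_x norm_mult power_mult_distrib
      by (intro sum_mono mult_right_mono power_mono C) auto
    also have "\<dots> = C\<^sup>2 * (\<Sum>i\<in>F \<inter> supp x. (cmod (x i))\<^sup>2)"
      unfolding sum_distrib_left[symmetric]
      by (intro arg_cong[where f="\<lambda>t. C\<^sup>2 * t"] sum.mono_neutral_right F) (auto simp: supp_def)
    also have "\<dots> \<le> C\<^sup>2 * (\<Sum>i\<in>supp x. (cmod (x i))\<^sup>2)"
      by (intro mult_left_mono sum_mono2 fs) auto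
    finally show "(\<Sum>i\<in>F. (cmod (mapply (diag_mat g) x i))\<^sup>2) \<le> C\<^sup>2 * (\<Sum>i\<in>supp x. (cmod (x i))\<^sup>2)" .
  qed
  then show ?thesis unfolding Diag_def diag_mat_def by auto
qed

lemma block_pos_1_iff:
  "block_pos 1 M \<longleftrightarrow> (\<forall>x. finsupp x \<longrightarrow> cnonneg (\<Sum>i\<in>supp x. \<Sum>j\<in>supp x. cnj (x i) * M 0 0 i j * x j))"
proof (intro iffI allI impI)
  have one: "{..<1::nat} = {0}" by auto
  fix x :: "int \<Rightarrow> complex"
  assume "block_pos 1 M" "finsupp x"
  then show "cnonneg (\<Sum>i\<in>supp x. \<Sum>j\<in>supp x. cnj (x i) * M 0 0 i j * x j)"
    unfolding block_pos_def using one by (auto dest: spec[of _ "\<lambda>_. x"])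
next
  assume pos: "\<forall>x. finsupp x \<longrightarrow> cnonneg (\<Sum>i\<in>supp x. \<Sum>j\<in>supp x. cnj (x i) * M 0 0 i j * x j)"
  have "{..<1::nat} = {0}" by auto
  then show "block_pos 1 M"
    unfolding block_pos_def using pos by simp
qed

lemma block_pos_diag_mat:
  assumes "\<forall>m. cnonneg (g m)"
  shows "block_pos 1 (\<lambda>k l. diag_mat g)"
  unfolding block_pos_1_iff
proof (intro allI impI)
  fix x :: "int \<Rightarrow> complex" assume fx: "finsupp x"
  have "(\<Sum>i\<in>supp x. \<Sum>j\<in>supp x. cnj (x i) * diag_mat g i j * x j)
      = (\<Sum>i\<in>supp x. g i * complex_of_real ((cmod (x i))\<^sup>2))"
  proof (intro sum.cong refl)
    fix i assume i: "i \<in> supp x"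
    have "(\<Sum>j\<in>supp x. cnj (x i) * diag_mat g i j * x j) = (\<Sum>j\<in>{i}. cnj (x i) * diag_mat g i j * x j)"
      using fx i by (intro sum.mono_neutral_right) (auto simp: diag_mat_def finsupp_def supp_def)
    then show "(\<Sum>j\<in>supp x. cnj (x i) * diag_mat g i j * x j) = g i * complex_of_real ((cmod (x i))\<^sup>2)"
      unfolding cnj_mult_self[symmetric] by (simp add: diag_mat_def mult_ac)
  qed
  also have "cnonneg \<dots>"
    using assms by (intro cnonneg_sum) (auto simp: cnonneg_def)
  finally show "cnonneg (\<Sum>i\<in>supp x. \<Sum>j\<in>supp x. cnj (x i) * diag_mat g i j * x j)" .
qed

lemma fcoeff_in_Diag:
  assumes "A \<in> BL"
  shows "fcoeff A n \<in> Diag"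
proof -
  obtain K where K: "form_bounded A K" using BL_form_bounded assms by blast
  show ?thesis unfolding fcoeff_eq_diag_mat
    by (intro diag_mat_in_Diag bounded_rangeI[of _ K] form_bounded_entry[OF K])
qed

lemma bounded_range_diagonal: "form_bounded A K \<Longrightarrow> bounded (range (\<lambda>m. A (i + m) (j + m)))"
  by (rule bounded_rangeI[of _ K]) (rule form_bounded_entry)

lemma supp_translate: "supp (\<lambda>i. x (i - m)) = (\<lambda>i. i + m) ` supp x"
proof
  show "supp (\<lambda>i. x (i - m)) \<subseteq> (\<lambda>i. i + m) ` supp x"
  proof
    fix i assume "i \<in> supp (\<lambda>i. x (i - m))"
    then have "i - m \<in> supp x" "i = (i - m) + m" unfolding supp_def by auto
    then show "i \<in> (\<lambda>i. i + m) ` supp x" by blast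
  qed
qed (auto simp: supp_def)

lemma finsupp_translate: "finsupp x \<Longrightarrow> finsupp (\<lambda>i. x (i - m))"
  unfolding finsupp_def supp_def[symmetric] supp_translate by simp

lemma L2_cmod_translate:
  fixes m :: int
  shows "L2_cmod (\<lambda>i. u (i - m)) ((\<lambda>i. i + m) ` F) = L2_cmod u F"
  unfolding L2_set_def by (subst sum.reindex) (auto simp: inj_on_def)

lemma form_sum_translate:
  fixes A :: mat and m :: int
  shows "(\<Sum>i\<in>F. \<Sum>j\<in>G. cnj (u i) * A (i + m) (j + m) * v j) =
    (\<Sum>i\<in>(\<lambda>i. i + m) ` F. \<Sum>j\<in>(\<lambda>j. j + m) ` G. cnj (u (i - m)) * A i j * v (j - m))"
  by (simp add: sum.reindex inj_on_def)

locale covariant_ucp =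
  fixes \<Phi> :: "mat \<Rightarrow> mat"
  assumes ucp: "ucp_on Diag \<Phi>"
    and cov: "\<forall>D\<in>Diag. \<Phi> (mmul (mmul (bshift 1) D) (bshift (-1)))
                 = mmul (mmul (bshift 1) (\<Phi> D)) (bshift (-1))"
begin

definition diag_state :: "(int \<Rightarrow> complex) \<Rightarrow> complex" where
  "diag_state g = \<Phi> (diag_mat g) 0 0"

lemma Phi_Diag: "D \<in> Diag \<Longrightarrow> \<Phi> D \<in> Diag"
  using ucp unfolding ucp_on_def by blast

lemma Phi_linear: "D \<in> Diag \<Longrightarrow> E \<in> Diag \<Longrightarrow>
   \<Phi> (\<lambda>i j. a * D i j + b * E i j) = (\<lambda>i j. a * \<Phi> D i j + b * \<Phi> E i j)"
  using ucp unfolding ucp_on_def cp_on_def linear_on_def by blast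

lemma Phi_block_pos:
  "\<forall>k<n. \<forall>l<n. M k l \<in> Diag \<Longrightarrow> block_pos n M \<Longrightarrow> block_pos n (\<lambda>k l. \<Phi> (M k l))"
  using ucp unfolding ucp_on_def cp_on_def by blast

sublocale linf_state diag_state
proof
  fix g h :: "int \<Rightarrow> complex" and a b :: complex
  assume "bounded (range g)" "bounded (range h)"
  moreover have "diag_mat (\<lambda>m. a * g m + b * h m) = (\<lambda>i j. a * diag_mat g i j + b * diag_mat h i j)"
    by (auto simp: diag_mat_def fun_eq_iff)
  ultimately show "diag_state (\<lambda>m. a * g m + b * h m) = a * diag_state g + b * diag_state h"
    unfolding diag_state_def by (simp add: Phi_linear diag_mat_in_Diag)
next
  fix g :: "int \<Rightarrow> complex"
  assume "bounded (range g)" "\<forall>m. cnonneg (g m)"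
  then have "block_pos 1 (\<lambda>k l. \<Phi> (diag_mat g))"
    using Phi_block_pos[of 1 "\<lambda>k l. diag_mat g"] diag_mat_in_Diag block_pos_diag_mat by simp
  then have pos: "\<forall>x. finsupp x \<longrightarrow> cnonneg (\<Sum>i\<in>supp x. \<Sum>j\<in>supp x. cnj (x i) * \<Phi> (diag_mat g) i j * x j)"
    unfolding block_pos_1_iff .
  define e :: "int \<Rightarrow> complex" where "e = (\<lambda>i. if i = 0 then 1 else 0)"
  have supp_e: "supp e = {0}" unfolding supp_def e_def by auto
  then have "finsupp e" unfolding finsupp_def supp_def[symmetric] by simp
  then have "cnonneg (\<Sum>i\<in>supp e. \<Sum>j\<in>supp e. cnj (e i) * \<Phi> (diag_mat g) i j * e j)"
    using pos by blast
  then show "cnonneg (diag_state g)" unfolding supp_e by (simp add: e_def diag_state_def)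
next
  show "diag_state (\<lambda>_. 1) = 1"
    using ucp unfolding diag_state_def diag_mat_one ucp_on_def by (simp add: idm_def)
qed

lemma Phi_diag_mat_translate:
  assumes "bounded (range g)"
  shows "\<Phi> (diag_mat (\<lambda>m. g (m - k))) i i = \<Phi> (diag_mat g) (i - k) (i - k)"
proof -
  have step: "\<Phi> (diag_mat (\<lambda>m. h (m - 1))) i i = \<Phi> (diag_mat h) (i - 1) (i - 1)"
    if "bounded (range h)" for h i
  proof -
    have "diag_mat (\<lambda>m. h (m - 1)) = mmul (mmul (bshift 1) (diag_mat h)) (bshift (-1))"
      unfolding bshift_conj_apply by (auto simp: diag_mat_def fun_eq_iff)
    then have "\<Phi> (diag_mat (\<lambda>m. h (m - 1))) = mmul (mmul (bshift 1) (\<Phi> (diag_mat h))) (bshift (-1))"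
      using cov diag_mat_in_Diag[OF that] by simp
    then show ?thesis by (simp add: bshift_conj_apply)
  qed
  have translate: "bounded (range (\<lambda>m. g (m - k)))" for k
    using assms by (rule bounded_range_comp)
  show ?thesis
  proof (induction k arbitrary: i rule: int_induct[where k=0])
    case (step1 k)
    have "\<Phi> (diag_mat (\<lambda>m. g (m - (k + 1)))) i i = \<Phi> (diag_mat (\<lambda>m. g (m - 1 - k))) i i"
      by (simp add: algebra_simps)
    also have "\<dots> = \<Phi> (diag_mat (\<lambda>m. g (m - k))) (i - 1) (i - 1)"
      using step[OF translate[of k]] by simp
    finally show ?case using step1.IH by (simp add: algebra_simps)
  next
    case (step2 k)
    have "\<Phi> (diag_mat (\<lambda>m. g (m - k))) (i + 1) (i + 1) = \<Phi> (diag_mat (\<lambda>m. g (m - (k - 1)))) i i"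
      using step[OF translate[of "k - 1"], of "i + 1"] by (simp add: algebra_simps)
    then show ?case using step2.IH[of "i + 1"] by (simp add: algebra_simps)
  qed simp
qed

lemma Phi_diag_mat_apply:
  assumes "bounded (range g)"
  shows "\<Phi> (diag_mat g) i i = diag_state (\<lambda>m. g (m + i))"
  unfolding diag_state_def using Phi_diag_mat_translate[OF bounded_range_comp[OF assms], of "\<lambda>m. m + i" i i]
  by simp

definition Gamma :: "mat \<Rightarrow> mat" where
  "Gamma A = (\<lambda>i j. diag_state (\<lambda>m. A (i + m) (j + m)))"

lemma Gamma_fcoeff:
  assumes "A \<in> BL"
  shows "fcoeff (Gamma A) n = \<Phi> (fcoeff A n)"
proof -
  obtain K where K: "form_bounded A K" using BL_form_bounded assms by blast
  have "bounded (range (\<lambda>m. A m (m - n)))"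
    by (intro bounded_rangeI[of _ K] form_bounded_entry[OF K])
  then have "\<Phi> (fcoeff A n) i i = Gamma A i (i - n)" for i
    unfolding fcoeff_eq_diag_mat Gamma_def by (simp add: Phi_diag_mat_apply algebra_simps)
  moreover have "\<Phi> (fcoeff A n) i j = 0" if "i \<noteq> j" for i j
    using Phi_Diag[OF fcoeff_in_Diag[OF assms]] that unfolding Diag_def by blast
  ultimately show ?thesis
    by (auto simp: fcoeff_eq_diag_mat diag_mat_def fun_eq_iff)
qed

lemma Gamma_form_bounded:
  assumes "form_bounded A K"
  shows "form_bounded (Gamma A) K"
  unfolding form_bounded_def
proof (intro conjI allI impI)
  fix F G :: "int set" and u v :: "int \<Rightarrow> complex"
  assume F: "finite F" and G: "finite G"
  have "(\<Sum>i\<in>F. \<Sum>j\<in>G. cnj (u i) * Gamma A i j * v j) =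
        diag_state (\<lambda>m. \<Sum>i\<in>F. \<Sum>j\<in>G. cnj (u i) * A (i + m) (j + m) * v j)"
    unfolding Gamma_def by (rule state_double_sum[symmetric]) (rule bounded_range_diagonal[OF assms])
  also have "cmod \<dots> \<le> K * L2_cmod u F * L2_cmod v G"
  proof (rule norm_state_le)
    fix m
    show "cmod (\<Sum>i\<in>F. \<Sum>j\<in>G. cnj (u i) * A (i + m) (j + m) * v j) \<le> K * L2_cmod u F * L2_cmod v G"
      unfolding form_sum_translate L2_cmod_translate[of u m F, symmetric] L2_cmod_translate[of v m G, symmetric]
      using F G by (intro form_boundedD[OF assms]) auto
  qed
  finally show "cmod (\<Sum>i\<in>F. \<Sum>j\<in>G. cnj (u i) * Gamma A i j * v j) \<le> K * L2_cmod u F * L2_cmod v G" .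
qed (rule form_bounded_nonneg[OF assms])

lemma Gamma_BL: "A \<in> BL \<Longrightarrow> Gamma A \<in> BL"
  using BL_form_bounded Gamma_form_bounded unfolding BL_def bounded_mat_iff_form_bounded by blast

lemma Gamma_idempotent:
  assumes idem: "\<forall>D\<in>Diag. \<Phi> (\<Phi> D) = \<Phi> D" and A: "A \<in> BL"
  shows "Gamma (Gamma A) = Gamma A"
proof (intro ext)
  fix i j
  have "Gamma (Gamma A) i j = \<Phi> (\<Phi> (fcoeff A (i - j))) i i"
    by (subst mat_eq_fcoeff) (simp add: Gamma_fcoeff Gamma_BL A)
  also have "\<dots> = \<Phi> (fcoeff A (i - j)) i i" using idem fcoeff_in_Diag[OF A] by simp
  also have "\<dots> = Gamma A i j"
    by (subst (2) mat_eq_fcoeff) (simp add: Gamma_fcoeff A)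
  finally show "Gamma (Gamma A) i j = Gamma A i j" .
qed

lemma Gamma_linear: "linear_on BL Gamma"
  unfolding linear_on_def
proof (intro ballI allI)
  fix A C a b assume "A \<in> BL" "C \<in> BL"
  then obtain K1 K2 where K1: "form_bounded A K1" and K2: "form_bounded C K2"
    using BL_form_bounded by blast
  show "Gamma (\<lambda>i j. a * A i j + b * C i j) = (\<lambda>i j. a * Gamma A i j + b * Gamma C i j)"
    unfolding Gamma_def by (intro ext linear bounded_range_diagonal[OF K1] bounded_range_diagonal[OF K2])
qed

text \<open>Each translate of a positive block matrix is positive, and \<open>\<Gamma>\<close> averages the translates with
  the positive functional \<open>diag_state\<close>.\<close>
lemma Gamma_block_pos:
  assumes M: "\<forall>k<n. \<forall>l<n. M k l \<in> BL" and pos: "block_pos n M"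
  shows "block_pos n (\<lambda>k l. Gamma (M k l))"
  unfolding block_pos_def
proof (intro allI impI)
  fix x :: "nat \<Rightarrow> int \<Rightarrow> complex"
  assume fx: "\<forall>k<n. finsupp (x k)"
  define X where "X k l m = (\<Sum>i\<in>supp (x k). \<Sum>j\<in>supp (x l). cnj (x k i) * M k l (i + m) (j + m) * x l j)"
    for k l m
  have bounded_X: "bounded (range (X k l))" if "k < n" "l < n" for k l
  proof -
    have "M k l \<in> BL" using M that by simp
    then obtain K where K: "form_bounded (M k l) K" using BL_form_bounded by blast
    show ?thesis unfolding X_def
      by (intro bounded_range_sum bounded_range_mult bounded_range_diagonal[OF K])
  qed
  have "(\<Sum>k<n. \<Sum>l<n. \<Sum>i\<in>supp (x k). \<Sum>j\<in>supp (x l). cnj (x k i) * Gamma (M k l) i j * x l j)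
      = (\<Sum>k<n. \<Sum>l<n. diag_state (X k l))"
  proof (intro sum.cong refl)
    fix k l assume "k \<in> {..<n}" "l \<in> {..<n}"
    then have "M k l \<in> BL" using M by simp
    then obtain K where K: "form_bounded (M k l) K" using BL_form_bounded by blast
    show "(\<Sum>i\<in>supp (x k). \<Sum>j\<in>supp (x l). cnj (x k i) * Gamma (M k l) i j * x l j) = diag_state (X k l)"
      unfolding X_def Gamma_def by (rule state_double_sum[symmetric]) (rule bounded_range_diagonal[OF K])
  qed
  also have "\<dots> = (\<Sum>k<n. diag_state (\<lambda>m. \<Sum>l<n. X k l m))"
    using bounded_X by (intro sum.cong refl state_sum[symmetric]) auto
  also have "\<dots> = diag_state (\<lambda>m. \<Sum>k<n. \<Sum>l<n. X k l m)"
    using bounded_X by (intro state_sum[symmetric] bounded_range_sum) auto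
  also have "cnonneg \<dots>"
  proof (rule positive)
    show "bounded (range (\<lambda>m. \<Sum>k<n. \<Sum>l<n. X k l m))"
      using bounded_X by (intro bounded_range_sum) auto
    show "\<forall>m. cnonneg (\<Sum>k<n. \<Sum>l<n. X k l m)"
    proof
      fix m
      define y where "y k i = x k (i - m)" for k i
      have fy: "\<forall>k<n. finsupp (y k)" using fx unfolding y_def by (auto intro: finsupp_translate)
      have "(\<Sum>k<n. \<Sum>l<n. X k l m) =
          (\<Sum>k<n. \<Sum>l<n. \<Sum>i\<in>supp (y k). \<Sum>j\<in>supp (y l). cnj (y k i) * M k l i j * y l j)"
        unfolding X_def y_def supp_translate by (intro sum.cong refl form_sum_translate)
      also have "cnonneg \<dots>"
        using pos fy unfolding block_pos_def by blast
      finally show "cnonneg (\<Sum>k<n. \<Sum>l<n. X k l m)" .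
    qed
  qed
  finally show "cnonneg (\<Sum>k<n. \<Sum>l<n. \<Sum>i\<in>supp (x k). \<Sum>j\<in>supp (x l). cnj (x k i) * Gamma (M k l) i j * x l j)" .
qed

lemma Gamma_idm: "Gamma idm = idm"
  unfolding Gamma_def idm_def by (auto simp: fun_eq_iff state_const)

lemma Gamma_ucp: "ucp_on BL Gamma"
  unfolding ucp_on_def cp_on_def using Gamma_BL Gamma_linear Gamma_block_pos Gamma_idm by blast

end

lemma infsum_translate: "(\<Sum>\<^sub>\<infinity>k::int. f (k + m)) = (\<Sum>\<^sub>\<infinity>k. f k)"
proof -
  have "bij (\<lambda>k::int. k + m)"
    by (rule bij_betwI[of _ _ _ "\<lambda>k. k - m"]) auto
  then show ?thesis using infsum_reindex_bij_betw[of "\<lambda>k. k + m" UNIV UNIV f] by simp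
qed

lemma square_sum_reindex_le:
  assumes "\<And>N. finite N \<Longrightarrow> (\<Sum>n\<in>N. (cmod (c n))\<^sup>2) \<le> C" "inj h" "finite H"
  shows "(\<Sum>k\<in>H. (cmod (c (h k)))\<^sup>2) \<le> C"
proof -
  have "(\<Sum>k\<in>H. (cmod (c (h k)))\<^sup>2) = (\<Sum>n\<in>h ` H. (cmod (c n))\<^sup>2)"
    using assms(2) by (simp add: sum.reindex inj_on_subset)
  also have "\<dots> \<le> C" using assms by simp
  finally show ?thesis .
qed

context covariant_ucp
begin

lemma Gamma_toeplitz_left:
  assumes c: "\<And>N. finite N \<Longrightarrow> (\<Sum>n\<in>N. (cmod (c n))\<^sup>2) \<le> C" and A: "A \<in> BL"
  shows "Gamma (mmul (\<lambda>i j. c (i - j)) A) = mmul (\<lambda>i j. c (i - j)) (Gamma A)"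
proof (intro ext)
  fix i j
  obtain K where K: "form_bounded A K" using BL_form_bounded A by blast
  have "Gamma (mmul (\<lambda>i j. c (i - j)) A) i j = diag_state (\<lambda>m. \<Sum>\<^sub>\<infinity>k. c (i + m - k) * A k (j + m))"
    unfolding Gamma_def mmul_def by simp
  also have "\<dots> = diag_state (\<lambda>m. \<Sum>\<^sub>\<infinity>k. c (i - k) * A (k + m) (j + m))"
    using infsum_translate[of "\<lambda>k. c (i + m - k) * A k (j + m)" m for m] by simp
  also have "\<dots> = (\<Sum>\<^sub>\<infinity>k. c (i - k) * diag_state (\<lambda>m. A (k + m) (j + m)))"
  proof (rule state_infsum[symmetric])
    show "(\<Sum>k\<in>H. (cmod (c (i - k)))\<^sup>2) \<le> C" if "finite H" for H
      by (rule square_sum_reindex_le[OF c _ that]) (auto intro!: injI)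
    show "(\<Sum>k\<in>H. (cmod (A (k + m) (j + m)))\<^sup>2) \<le> K\<^sup>2" if "finite H" for m H
      by (rule square_sum_reindex_le[OF form_bounded_column[OF K, of _ "j + m"] _ that])
        (auto intro!: injI)
  qed
  also have "\<dots> = mmul (\<lambda>i j. c (i - j)) (Gamma A) i j"
    unfolding mmul_def Gamma_def by simp
  finally show "Gamma (mmul (\<lambda>i j. c (i - j)) A) i j = mmul (\<lambda>i j. c (i - j)) (Gamma A) i j" .
qed

lemma Gamma_toeplitz_right:
  assumes c: "\<And>N. finite N \<Longrightarrow> (\<Sum>n\<in>N. (cmod (c n))\<^sup>2) \<le> C" and A: "A \<in> BL"
  shows "Gamma (mmul A (\<lambda>i j. c (i - j))) = mmul (Gamma A) (\<lambda>i j. c (i - j))"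
proof (intro ext)
  fix i j
  obtain K where K: "form_bounded A K" using BL_form_bounded A by blast
  have "Gamma (mmul A (\<lambda>i j. c (i - j))) i j = diag_state (\<lambda>m. \<Sum>\<^sub>\<infinity>k. A (i + m) k * c (k - (j + m)))"
    unfolding Gamma_def mmul_def by simp
  also have "\<dots> = diag_state (\<lambda>m. \<Sum>\<^sub>\<infinity>k. c (k - j) * A (i + m) (k + m))"
    using infsum_translate[of "\<lambda>k. A (i + m) k * c (k - (j + m))" m for m] by (simp add: mult.commute)
  also have "\<dots> = (\<Sum>\<^sub>\<infinity>k. c (k - j) * diag_state (\<lambda>m. A (i + m) (k + m)))"
  proof (rule state_infsum[symmetric])
    show "(\<Sum>k\<in>H. (cmod (c (k - j)))\<^sup>2) \<le> C" if "finite H" for H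
      by (rule square_sum_reindex_le[OF c _ that]) (auto intro!: injI)
    show "(\<Sum>k\<in>H. (cmod (A (i + m) (k + m)))\<^sup>2) \<le> K\<^sup>2" if "finite H" for m H
      by (rule square_sum_reindex_le[OF form_bounded_row[OF K, of _ "i + m"] _ that])
        (auto intro!: injI)
  qed
  also have "\<dots> = mmul (Gamma A) (\<lambda>i j. c (i - j)) i j"
    unfolding mmul_def Gamma_def by (simp add: mult.commute)
  finally show "Gamma (mmul A (\<lambda>i j. c (i - j))) i j = mmul (Gamma A) (\<lambda>i j. c (i - j)) i j" .
qed

lemma Gamma_Laurent_bimodule:
  assumes "L \<in> Laurent" "A \<in> BL"
  shows "Gamma (mmul L A) = mmul L (Gamma A) \<and> Gamma (mmul A L) = mmul (Gamma A) L"
proof -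
  obtain f where f: "f \<in> Linfty" and L: "L = (\<lambda>i j. fourier f (i - j))"
    using assms(1) unfolding Laurent_def by blast
  obtain C where "\<And>N. finite N \<Longrightarrow> (\<Sum>n\<in>N. (cmod (fourier f n))\<^sup>2) \<le> C"
    using Linfty_fourier_square_bounded[OF f] by blast
  then show ?thesis
    unfolding L using Gamma_toeplitz_left Gamma_toeplitz_right assms(2) by blast
qed

end

theorem theorem3p1:
  fixes \<Phi> :: "mat \<Rightarrow> mat"
  assumes ucp: "ucp_on Diag \<Phi>"
    and cov: "\<forall>D\<in>Diag. \<Phi> (mmul (mmul (bshift 1) D) (bshift (-1)))
                 = mmul (mmul (bshift 1) (\<Phi> D)) (bshift (-1))"
  shows "\<exists>\<Gamma> :: mat \<Rightarrow> mat.
           ucp_on BL \<Gamma>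
         \<and> (\<forall>L\<in>Laurent. \<forall>A\<in>BL. \<Gamma> (mmul L A) = mmul L (\<Gamma> A)
                              \<and> \<Gamma> (mmul A L) = mmul (\<Gamma> A) L)
         \<and> (\<forall>A\<in>BL. \<forall>n. fcoeff (\<Gamma> A) n = \<Phi> (fcoeff A n))
         \<and> ((\<forall>D\<in>Diag. \<Phi> (\<Phi> D) = \<Phi> D) \<longrightarrow> (\<forall>A\<in>BL. \<Gamma> (\<Gamma> A) = \<Gamma> A))"
proof -
  interpret covariant_ucp \<Phi> using ucp cov by unfold_locales
  show ?thesis
    using Gamma_ucp Gamma_Laurent_bimodule Gamma_fcoeff Gamma_idempotent
    by (intro exI[of _ Gamma]) blast
qed

end
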